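(* Let $\alpha$ be irrational with $\ln2/\ln3<\alpha<1$ and write $1c_\alpha=s_0s_1s_2\cdots$. Then $$\limsup_{k\to\infty}\Phi_{\mathbb{R}}(s_ks_{k+1}\cdots)=\Phi_{\mathbb{R}}(1c_\alpha),\qquad \liminf_{k\to\infty}\Phi_{\mathbb{R}}(s_ks_{k+1}\cdots)=\Phi_{\mathbb{R}}(0c_\alpha)=3\Phi_{\mathbb{R}}(1c_\alpha)+1.$$
   Context: For $0<\alpha<1$, $1c_\alpha=(\lceil(j+1)\alpha\rceil-\lceil j\alpha\rceil)_{j\ge0}$ and $0c_\alpha=(\lfloor(j+1)\alpha\rfloor-\lfloor j\alpha\rfloor)_{j\ge0}$. For an infinite $0$-$1$ word $w$ with $1$'s at positions $d_0<d_1<\cdots$, $\Phi_{\mathbb{R}}(w)=-\sum_{i\ge0}2^{d_i}/3^{i+1}$ (a convergent real series in the situation considered). *)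

theory Defs
  imports "HOL-Analysis.Analysis" "HOL-Library.Infinite_Set" "HOL-Library.Liminf_Limsup"
begin

text \<open>Upper and lower characteristic (mechanical) words; 0-1 words are nat \<Rightarrow> int.\<close>
definition cword1 :: "real \<Rightarrow> nat \<Rightarrow> int" where
  "cword1 \<alpha> j = \<lceil>(real j + 1) * \<alpha>\<rceil> - \<lceil>real j * \<alpha>\<rceil>"

definition cword0 :: "real \<Rightarrow> nat \<Rightarrow> int" where
  "cword0 \<alpha> j = \<lfloor>(real j + 1) * \<alpha>\<rfloor> - \<lfloor>real j * \<alpha>\<rfloor>"

definition PhiR :: "(nat \<Rightarrow> int) \<Rightarrow> real" where
  "PhiR w = - (\<Sum>i. 2 ^ (enumerate {n. w n = 1} i) / 3 ^ (i + 1))"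

end

theory Submission
  imports Defs
begin

text \<open>The 1's of the shifted word \<open>s\<^sub>k s\<^sub>k\<^sub>+\<^sub>1 ...\<close> sit at the positions
  \<open>\<lfloor>(i + c\<^sub>k) / \<alpha>\<rfloor>\<close> with intercept \<open>c\<^sub>k = \<lceil>k\<alpha>\<rceil> - k\<alpha> \<in> [0,1)\<close>, and those of
  \<open>0c\<^sub>\<alpha>\<close> at \<open>\<lfloor>(i + 1) / \<alpha>\<rfloor>\<close>. So every value involved is \<open>-T(c)\<close> for the series
  \<open>T(c) = \<Sum>\<^sub>i 2^\<lfloor>(i + c)/\<alpha>\<rfloor> / 3^(i+1)\<close>, which converges because \<open>2 powr (1/\<alpha>) < 3\<close>.
  \<open>T\<close> is nondecreasing on \<open>[0,1]\<close>, right-continuous at 0 and, \<open>\<alpha>\<close> being irrational,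
  left-continuous at 1 (Tannery's theorem); by Kronecker's theorem \<open>c\<^sub>k\<close> comes arbitrarily
  close to 0 and to 1 for infinitely many \<open>k\<close>. Hence the lim sup is \<open>-T(0) = \<Phi>(1c\<^sub>\<alpha>)\<close> and
  the lim inf is \<open>-T(1) = \<Phi>(0c\<^sub>\<alpha>)\<close>; dropping the first term of \<open>T(0)\<close> gives
  \<open>T(1) = 3 T(0) - 1\<close>.\<close>

lemma enumerate_range_strict_mono:
  fixes h :: "nat \<Rightarrow> nat"
  assumes "strict_mono h"
  shows "enumerate (range h) n = h n"
proof -
  have inf: "infinite (range h)"
    using assms by (metis finite_imageD strict_mono_imp_inj_on infinite_UNIV_nat)
  show ?thesis
  proof (induction n)
    case 0
    show ?case unfolding enumerate_0
      using assms by (intro Least_equality) (auto simp: strict_mono_less_eq)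
  next
    case (Suc n)
    show ?case unfolding enumerate_Suc''[OF inf] Suc
      using assms by (intro Least_equality) (auto simp: strict_mono_less strict_mono_less_eq)
  qed
qed

lemma of_nat_mult_irrational:
  fixes \<theta> :: real
  assumes "\<theta> \<notin> \<rat>" and "0 < m"
  shows "real m * \<theta> \<notin> \<rat>"
proof
  assume "real m * \<theta> \<in> \<rat>"
  then have "real m * \<theta> / real m \<in> \<rat>" by (intro Rats_divide) auto
  with assms show False by simp
qed

lemma frac_mult_irrational_pos:
  fixes \<theta> :: real
  assumes "\<theta> \<notin> \<rat>" and "0 < k"
  shows "0 < frac (real k * \<theta>)"
  using of_nat_mult_irrational[OF assms] Ints_subset_Rats frac_ge_0[of "real k * \<theta>"]
  by (auto simp: order_le_less)

lemma frequently_frac_mult_near: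
  fixes \<theta> :: real
  assumes "\<theta> \<notin> \<rat>" and "0 \<le> t" "t \<le> 1" and "0 < \<epsilon>"
  shows "\<exists>\<^sub>F k in sequentially. \<bar>frac (real k * \<theta>) - t\<bar> < \<epsilon>"
  unfolding frequently_sequentially
proof
  fix n
  \<comment> \<open>Kronecker's theorem for the irrational \<open>(n + 1) \<theta>\<close> yields a multiple of \<open>\<theta>\<close> beyond \<open>n\<close>.\<close>
  obtain k where "0 < k" and "\<bar>frac (real k * (real (Suc n) * \<theta>)) - t\<bar> < \<epsilon>"
    using Kronecker_approx_1_explicit[OF of_nat_mult_irrational[OF assms(1)] assms(2-4)] by blast
  moreover have "n \<le> k * Suc n" using \<open>0 < k\<close> by (cases k) auto
  ultimately show "\<exists>m\<ge>n. \<bar>frac (real m * \<theta>) - t\<bar> < \<epsilon>"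
    by (metis mult.assoc of_nat_mult)
qed

lemma ceiling_add_diff_eq_1_iff:
  fixes x a :: real
  assumes "0 < a" "a \<le> 1"
  shows "\<lceil>x + a\<rceil> - \<lceil>x\<rceil> = 1 \<longleftrightarrow> (\<exists>m::int. x \<le> m \<and> m < x + a)"
proof
  assume "\<lceil>x + a\<rceil> - \<lceil>x\<rceil> = 1"
  then show "\<exists>m::int. x \<le> m \<and> m < x + a"
    using ceiling_correct[of "x + a"] by (intro exI[of _ "\<lceil>x\<rceil>"]) auto
next
  assume "\<exists>m::int. x \<le> m \<and> m < x + a"
  then have "\<lceil>x\<rceil> < x + a" by (meson ceiling_le le_less_trans of_int_le_iff)
  then have "\<lceil>x + a\<rceil> = \<lceil>x\<rceil> + 1"
    using assms by (intro ceiling_unique) (auto, linarith)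
  then show "\<lceil>x + a\<rceil> - \<lceil>x\<rceil> = 1" by simp
qed

lemma floor_add_diff_eq_1_iff:
  fixes x a :: real
  assumes "0 < a" "a \<le> 1"
  shows "\<lfloor>x + a\<rfloor> - \<lfloor>x\<rfloor> = 1 \<longleftrightarrow> (\<exists>m::int. x < m \<and> m \<le> x + a)"
proof
  assume "\<lfloor>x + a\<rfloor> - \<lfloor>x\<rfloor> = 1"
  then have "real_of_int \<lfloor>x + a\<rfloor> = of_int \<lfloor>x\<rfloor> + 1" by simp
  then show "\<exists>m::int. x < m \<and> m \<le> x + a"
    using floor_correct[of x] floor_correct[of "x + a"] by (intro exI[of _ "\<lfloor>x + a\<rfloor>"]) auto
next
  assume "\<exists>m::int. x < m \<and> m \<le> x + a"
  then have "x < \<lfloor>x + a\<rfloor>" by (meson le_floor_iff less_le_trans floor_less_iff not_less)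
  moreover have "\<lfloor>x + a\<rfloor> \<le> \<lfloor>x\<rfloor> + 1"
    using assms floor_correct[of x] by (simp add: floor_le_iff) linarith
  ultimately have "\<lfloor>x + a\<rfloor> = \<lfloor>x\<rfloor> + 1"
    using floor_less_iff[of x "\<lfloor>x + a\<rfloor>"] by linarith
  then show "\<lfloor>x + a\<rfloor> - \<lfloor>x\<rfloor> = 1" by simp
qed

definition one_positions :: "real \<Rightarrow> real \<Rightarrow> nat \<Rightarrow> nat" where
  "one_positions a c i = nat \<lfloor>(real i + c) / a\<rfloor>"

definition intercept :: "real \<Rightarrow> nat \<Rightarrow> real" where
  "intercept a k = \<lceil>real k * a\<rceil> - real k * a"

lemma intercept_nonneg: "0 \<le> intercept a k"
  unfolding intercept_def by linarith

lemma intercept_less_1: "intercept a k < 1"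
  unfolding intercept_def by linarith

lemma intercept_eq_frac: "intercept a k = frac (real k * - a)"
  unfolding intercept_def frac_def by (simp add: ceiling_def)

lemma strict_mono_one_positions:
  assumes "0 < a" "a < 1" "0 \<le> c"
  shows "strict_mono (one_positions a c)"
proof (rule strict_mono_Suc_iff[THEN iffD2], intro allI)
  fix i
  have "(real i + c) / a + 1 \<le> (real (Suc i) + c) / a"
    using assms by (simp add: field_simps)
  then have "\<lfloor>(real i + c) / a\<rfloor> < \<lfloor>(real (Suc i) + c) / a\<rfloor>" by linarith
  moreover have "0 \<le> \<lfloor>(real i + c) / a\<rfloor>" using assms by simp
  ultimately show "one_positions a c i < one_positions a c (Suc i)"
    unfolding one_positions_def by (simp only: nat_less_eq_zless)
qed

lemma one_positions_mono:
  assumes "0 < a" "c \<le> d"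
  shows "one_positions a c i \<le> one_positions a d i"
  unfolding one_positions_def using assms
  by (intro nat_mono floor_mono divide_right_mono) auto

lemma one_positions_eq_iff:
  assumes "0 < a" "0 \<le> c"
  shows "one_positions a c i = j \<longleftrightarrow> real j * a \<le> real i + c \<and> real i + c < (real j + 1) * a"
proof -
  have "one_positions a c i = j \<longleftrightarrow> \<lfloor>(real i + c) / a\<rfloor> = int j"
    unfolding one_positions_def using assms by auto
  also have "\<dots> \<longleftrightarrow> real j \<le> (real i + c) / a \<and> (real i + c) / a < real j + 1"
    by (simp add: floor_eq_iff)
  also have "\<dots> \<longleftrightarrow> real j * a \<le> real i + c \<and> real i + c < (real j + 1) * a"
    using assms by (simp add: field_simps)
  finally show ?thesis .
qed

lemma ones_of_shifted_cword1:
  assumes "0 < a" "a < 1"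
  shows "{j. cword1 a (k + j) = 1} = range (one_positions a (intercept a k))"
proof (intro set_eqI)
  fix j
  define K where "K = \<lceil>real k * a\<rceil>"
  define x where "x = real (k + j) * a"
  have "j \<in> range (one_positions a (intercept a k))
      \<longleftrightarrow> (\<exists>i::nat. x \<le> of_int (K + int i) \<and> of_int (K + int i) < x + a)"
    using one_positions_eq_iff[OF assms(1) intercept_nonneg]
    by (auto simp: image_iff intercept_def K_def x_def algebra_simps eq_commute[of j])
  also have "\<dots> \<longleftrightarrow> (\<exists>m::int. x \<le> m \<and> m < x + a)"
  proof
    assume "\<exists>m::int. x \<le> m \<and> m < x + a"
    then obtain m :: int where m: "x \<le> m" "m < x + a" by blast
    have "real k * a \<le> x" unfolding x_def using assms by (simp add: mult_right_mono)
    with m have "K \<le> m" unfolding K_def by (simp add: ceiling_le)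
    with m show "\<exists>i::nat. x \<le> of_int (K + int i) \<and> of_int (K + int i) < x + a"
      by (intro exI[of _ "nat (m - K)"]) simp
  qed blast
  also have "\<dots> \<longleftrightarrow> cword1 a (k + j) = 1"
    using ceiling_add_diff_eq_1_iff[of a x] assms
    by (simp add: cword1_def x_def distrib_right)
  finally show "j \<in> {j. cword1 a (k + j) = 1} \<longleftrightarrow> j \<in> range (one_positions a (intercept a k))"
    by simp
qed

lemma ones_of_cword0:
  assumes "a \<notin> \<rat>" "0 < a" "a < 1"
  shows "{j. cword0 a j = 1} = range (one_positions a 1)"
proof (intro set_eqI)
  fix j
  define x where "x = real j * a"
  have not_int: "real n * a \<noteq> of_int m" if "0 < n" for n :: nat and m :: int
    using of_nat_mult_irrational[OF assms(1) that] by auto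
  have "j \<in> range (one_positions a 1)
      \<longleftrightarrow> (\<exists>i::nat. x \<le> of_int (int i + 1) \<and> of_int (int i + 1) < x + a)"
    using one_positions_eq_iff[OF assms(2), of 1]
    by (auto simp: image_iff x_def algebra_simps eq_commute[of j])
  also have "\<dots> \<longleftrightarrow> (\<exists>m::int. x < m \<and> m \<le> x + a)"
  proof
    assume "\<exists>i::nat. x \<le> of_int (int i + 1) \<and> of_int (int i + 1) < x + a"
    then obtain i :: nat where i: "x \<le> of_int (int i + 1)" "of_int (int i + 1) < x + a" by blast
    have "x \<noteq> of_int (int i + 1)"
      using not_int[of j "int i + 1"] unfolding x_def by (cases "j = 0") auto
    with i show "\<exists>m::int. x < m \<and> m \<le> x + a" by (intro exI[of _ "int i + 1"]) auto
  next
    assume "\<exists>m::int. x < m \<and> m \<le> x + a"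
    then obtain m :: int where m: "x < m" "m \<le> x + a" by blast
    have "0 \<le> x" unfolding x_def using assms by simp
    with m have "1 \<le> m" by linarith
    moreover have "x + a \<noteq> of_int m"
      using not_int[of "Suc j" m] unfolding x_def by (simp add: distrib_right)
    ultimately show "\<exists>i::nat. x \<le> of_int (int i + 1) \<and> of_int (int i + 1) < x + a"
      using m by (intro exI[of _ "nat (m - 1)"]) auto
  qed
  also have "\<dots> \<longleftrightarrow> cword0 a j = 1"
    using floor_add_diff_eq_1_iff[of a x] assms
    by (simp add: cword0_def x_def distrib_right)
  finally show "j \<in> {j. cword0 a j = 1} \<longleftrightarrow> j \<in> range (one_positions a 1)"
    by simp
qed

lemma frequently_intercept_at_right_0:
  assumes "a \<notin> \<rat>" and "eventually P (at_right 0)"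
  shows "\<exists>\<^sub>F k in sequentially. P (intercept a k)"
proof -
  obtain b :: real where "0 < b" and b: "\<And>c. 0 < c \<Longrightarrow> c < b \<Longrightarrow> P c"
    using assms(2) unfolding eventually_at_right_field by blast
  have "- a \<notin> \<rat>" using assms(1) by (metis Rats_minus_iff)
  then have "\<exists>\<^sub>F k in sequentially. 0 < k \<and> \<bar>frac (real k * - a) - 0\<bar> < b"
    using frequently_frac_mult_near[of "- a" 0 b] \<open>0 < b\<close>
    by (intro frequently_eventually_conj eventually_gt_at_top) auto
  then show ?thesis
  proof (rule frequently_elim1)
    fix k assume "0 < k \<and> \<bar>frac (real k * - a) - 0\<bar> < b"
    with frac_mult_irrational_pos[OF \<open>- a \<notin> \<rat>\<close>] show "P (intercept a k)"
      by (intro b) (auto simp: intercept_eq_frac)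
  qed
qed

lemma frequently_intercept_at_left_1:
  assumes "a \<notin> \<rat>" and "eventually P (at_left 1)"
  shows "\<exists>\<^sub>F k in sequentially. P (intercept a k)"
proof -
  obtain b :: real where "b < 1" and b: "\<And>c. b < c \<Longrightarrow> c < 1 \<Longrightarrow> P c"
    using assms(2) unfolding eventually_at_left_field by blast
  have "- a \<notin> \<rat>" using assms(1) by (metis Rats_minus_iff)
  then have "\<exists>\<^sub>F k in sequentially. \<bar>frac (real k * - a) - 1\<bar> < 1 - b"
    using frequently_frac_mult_near[of "- a" 1 "1 - b"] \<open>b < 1\<close> by auto
  then show ?thesis
  proof (rule frequently_elim1)
    fix k assume "\<bar>frac (real k * - a) - 1\<bar> < 1 - b"
    then show "P (intercept a k)"
      using intercept_less_1[of a k] by (intro b) (auto simp: intercept_eq_frac)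
  qed
qed

definition phi_series :: "real \<Rightarrow> real \<Rightarrow> real" where
  "phi_series a c = (\<Sum>i. 2 ^ one_positions a c i / 3 ^ (i + 1))"

lemma PhiR_shifted_cword1:
  assumes "0 < a" "a < 1"
  shows "PhiR (\<lambda>j. cword1 a (k + j)) = - phi_series a (intercept a k)"
  unfolding PhiR_def phi_series_def ones_of_shifted_cword1[OF assms]
    enumerate_range_strict_mono[OF strict_mono_one_positions[OF assms intercept_nonneg]] ..

lemma PhiR_cword1:
  assumes "0 < a" "a < 1"
  shows "PhiR (cword1 a) = - phi_series a 0"
  using PhiR_shifted_cword1[OF assms, of 0] by (simp add: intercept_def)

lemma PhiR_cword0:
  assumes "a \<notin> \<rat>" "0 < a" "a < 1"
  shows "PhiR (cword0 a) = - phi_series a 1"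
  unfolding PhiR_def phi_series_def ones_of_cword0[OF assms]
    enumerate_range_strict_mono[OF strict_mono_one_positions[OF assms(2,3) zero_le_one]] ..

lemma pos_if_gt_ln2_div_ln3:
  fixes a :: real
  assumes "ln 2 / ln 3 < a"
  shows "0 < a"
proof -
  have "0 < ln 2 / ln (3::real)" by simp
  with assms show ?thesis by linarith
qed

lemma two_powr_inverse_less_3:
  fixes a :: real
  assumes "ln 2 / ln 3 < a"
  shows "2 powr (1 / a) < 3"
proof -
  have "0 < a" using pos_if_gt_ln2_div_ln3[OF assms] .
  then have "ln 2 / a < ln 3" using assms by (simp add: field_simps)
  then have "exp (ln 2 / a) < exp (ln 3)" by (simp only: exp_less_cancel_iff)
  then show ?thesis by (simp add: powr_def)
qed

lemma phi_series_term_le: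
  assumes "0 < a" "0 \<le> c" "c \<le> 1"
  shows "2 ^ one_positions a c i / 3 ^ (i + 1) \<le> (2 powr (1 / a) / 3) ^ (i + 1)"
proof -
  have "real (one_positions a c i) \<le> (real i + c) / a"
    unfolding one_positions_def using assms by simp
  also have "\<dots> \<le> (1 / a) * real (i + 1)" using assms by (simp add: field_simps)
  finally have le: "real (one_positions a c i) \<le> (1 / a) * real (i + 1)" .
  have "(2::real) ^ one_positions a c i = 2 powr real (one_positions a c i)"
    by (simp add: powr_realpow)
  also have "\<dots> \<le> 2 powr ((1 / a) * real (i + 1))" using le by (intro powr_mono) auto
  also have "\<dots> = (2 powr (1 / a)) powr real (i + 1)" by (simp add: powr_powr)
  also have "\<dots> = (2 powr (1 / a)) ^ (i + 1)" by (rule powr_realpow) simp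
  finally have "(2::real) ^ one_positions a c i \<le> (2 powr (1 / a)) ^ (i + 1)" .
  then show ?thesis by (simp add: power_divide divide_right_mono)
qed

lemma summable_phi_series_bound:
  fixes a :: real
  assumes "ln 2 / ln 3 < a"
  shows "summable (\<lambda>i. (2 powr (1 / a) / 3) ^ (i + 1))"
proof -
  have "norm (2 powr (1 / a) / 3) < (1::real)" using two_powr_inverse_less_3[OF assms] by simp
  from summable_mult[OF summable_geometric[OF this], of "2 powr (1 / a) / 3"] show ?thesis
    by (simp add: mult.commute)
qed

lemma summable_phi_series:
  fixes a :: real
  assumes "ln 2 / ln 3 < a" "0 \<le> c" "c \<le> 1"
  shows "summable (\<lambda>i. 2 ^ one_positions a c i / 3 ^ (i + 1) :: real)"
  using phi_series_term_le[OF pos_if_gt_ln2_div_ln3[OF assms(1)] assms(2,3)]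
  by (intro summable_comparison_test'[OF summable_phi_series_bound[OF assms(1)], of 0]) simp

lemma phi_series_mono:
  fixes a :: real
  assumes "ln 2 / ln 3 < a" "0 \<le> c" "c \<le> d" "d \<le> 1"
  shows "phi_series a c \<le> phi_series a d"
  unfolding phi_series_def
  using assms one_positions_mono[OF pos_if_gt_ln2_div_ln3[OF assms(1)] assms(3)]
  by (intro suminf_le summable_phi_series divide_right_mono power_increasing) auto

lemma phi_series_1_eq:
  fixes a :: real
  assumes "ln 2 / ln 3 < a"
  shows "phi_series a 1 = 3 * phi_series a 0 - 1"
proof -
  have "0 < a" using pos_if_gt_ln2_div_ln3[OF assms] .
  have shift: "one_positions a 0 (Suc i) = one_positions a 1 i" for i
    unfolding one_positions_def by (simp add: add.commute)
  have "phi_series a 0 = (\<Sum>i. 2 ^ one_positions a 0 (Suc i) / 3 ^ (Suc i + 1)) + 1 / 3"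
    unfolding phi_series_def using \<open>0 < a\<close>
    by (subst suminf_split_head[OF summable_phi_series[OF assms]]) (auto simp: one_positions_def)
  also have "\<dots> = (\<Sum>i. 1 / 3 * (2 ^ one_positions a 1 i / 3 ^ (i + 1))) + 1 / 3"
    by (simp add: shift)
  also have "\<dots> = phi_series a 1 / 3 + 1 / 3"
    unfolding phi_series_def by (subst suminf_mult[OF summable_phi_series[OF assms]]) auto
  finally show ?thesis by simp
qed

lemma tendsto_phi_series:
  fixes a :: real
  assumes "ln 2 / ln 3 < a" and "F \<noteq> bot"
    and "\<And>i. eventually (\<lambda>c. one_positions a c i = one_positions a c0 i) F"
    and "eventually (\<lambda>c. 0 \<le> c \<and> c \<le> 1) F"
  shows "(phi_series a \<longlongrightarrow> phi_series a c0) F"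
proof -
  have lim: "((\<lambda>c. 2 ^ one_positions a c i / 3 ^ (i + 1) :: real)
          \<longlongrightarrow> 2 ^ one_positions a c0 i / 3 ^ (i + 1)) F" for i
    by (rule tendsto_eventually) (rule eventually_mono[OF assms(3)], simp)
  have bound: "\<forall>\<^sub>F (i, c) in at_top \<times>\<^sub>F F.
      norm (2 ^ one_positions a c i / 3 ^ (i + 1) :: real) \<le> (2 powr (1 / a) / 3) ^ (i + 1)"
    using eventually_prodI[OF always_eventually[of "\<lambda>_::nat. True"] assms(4)]
    by (rule eventually_mono)
       (use phi_series_term_le[OF pos_if_gt_ln2_div_ln3[OF assms(1)]] in auto)
  from tannerys_theorem[OF lim bound summable_phi_series_bound[OF assms(1)] assms(2)]
  show ?thesis unfolding phi_series_def by simp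
qed

lemma phi_series_tendsto_at_right_0:
  fixes a :: real
  assumes "ln 2 / ln 3 < a"
  shows "(phi_series a \<longlongrightarrow> phi_series a 0) (at_right 0)"
proof (rule tendsto_phi_series[OF assms])
  have "0 < a" using pos_if_gt_ln2_div_ln3[OF assms] .
  fix i
  have "((\<lambda>c. (real i + c) / a) \<longlongrightarrow> real i / a) (at_right 0)"
    using \<open>0 < a\<close> by (auto intro!: tendsto_eq_intros)
  then have "\<forall>\<^sub>F c in at_right 0. (real i + c) / a < of_int (\<lfloor>real i / a\<rfloor> + 1)"
    by (rule order_tendstoD) linarith
  with eventually_at_right_less[of 0]
  show "\<forall>\<^sub>F c in at_right 0. one_positions a c i = one_positions a 0 i"
  proof eventually_elim
    case (elim c)
    have "real i / a \<le> (real i + c) / a" using elim \<open>0 < a\<close> by (simp add: divide_right_mono)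
    with elim have "\<lfloor>(real i + c) / a\<rfloor> = \<lfloor>real i / a\<rfloor>"
      by (intro floor_unique order.trans[OF of_int_floor_le]) auto
    then show ?case unfolding one_positions_def by simp
  qed
next
  show "\<forall>\<^sub>F c in at_right 0. 0 \<le> c \<and> c \<le> (1::real)"
    unfolding eventually_at_right_field by (intro exI[of _ 1]) auto
qed simp

lemma phi_series_tendsto_at_left_1:
  fixes a :: real
  assumes "a \<notin> \<rat>" and "ln 2 / ln 3 < a"
  shows "(phi_series a \<longlongrightarrow> phi_series a 1) (at_left 1)"
proof (rule tendsto_phi_series[OF assms(2)])
  have "0 < a" using pos_if_gt_ln2_div_ln3[OF assms(2)] .
  fix i
  have "(real i + 1) / a \<notin> \<int>"
  proof
    assume "(real i + 1) / a \<in> \<int>"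
    then have "(real i + 1) / a \<in> \<rat>" using Ints_subset_Rats by blast
    have "a = (real i + 1) / ((real i + 1) / a)" using \<open>0 < a\<close> by (simp add: field_simps)
    also have "\<dots> \<in> \<rat>" by (rule Rats_divide[OF _ \<open>(real i + 1) / a \<in> \<rat>\<close>]) simp
    finally show False using assms(1) by simp
  qed
  moreover have "((\<lambda>c. (real i + c) / a) \<longlongrightarrow> (real i + 1) / a) (at_left 1)"
    using \<open>0 < a\<close> by (auto intro!: tendsto_eq_intros)
  ultimately show "\<forall>\<^sub>F c in at_left 1. one_positions a c i = one_positions a 1 i"
    unfolding one_positions_def using eventually_floor_eq by (metis (mono_tags, lifting) eventually_mono)
next
  show "\<forall>\<^sub>F c in at_left 1. 0 \<le> c \<and> c \<le> (1::real)"
    unfolding eventually_at_left_field by (intro exI[of _ 0]) auto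
qed simp

lemma limsup_eq_if_bounded_frequently_close:
  fixes f :: "nat \<Rightarrow> real"
  assumes "\<And>k. f k \<le> M" and "\<And>e. 0 < e \<Longrightarrow> \<exists>\<^sub>F k in sequentially. M - e < f k"
  shows "limsup (\<lambda>k. ereal (f k)) = ereal M"
proof (rule antisym)
  show "limsup (\<lambda>k. ereal (f k)) \<le> ereal M"
    by (rule Limsup_bounded) (use assms(1) in auto)
  show "ereal M \<le> limsup (\<lambda>k. ereal (f k))"
    unfolding limsup_INF_SUP
  proof (rule INF_greatest, rule ereal_le_epsilon2)
    fix n and e :: real assume "0 < e"
    then obtain k where "n \<le> k" "M - e < f k"
      using assms(2) unfolding frequently_sequentially by blast
    then have "ereal M \<le> ereal (f k) + ereal e" by simp
    also have "\<dots> \<le> (SUP m\<in>{n..}. ereal (f m)) + ereal e"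
      using \<open>n \<le> k\<close> by (intro add_right_mono SUP_upper) auto
    finally show "ereal M \<le> (SUP m\<in>{n..}. ereal (f m)) + ereal e" .
  qed
qed

lemma liminf_eq_if_bounded_frequently_close:
  fixes f :: "nat \<Rightarrow> real"
  assumes "\<And>k. M \<le> f k" and "\<And>e. 0 < e \<Longrightarrow> \<exists>\<^sub>F k in sequentially. f k < M + e"
  shows "liminf (\<lambda>k. ereal (f k)) = ereal M"
proof -
  have "limsup (\<lambda>k. ereal (- f k)) = ereal (- M)"
    using assms by (intro limsup_eq_if_bounded_frequently_close) (auto simp: algebra_simps)
  then show ?thesis
    using ereal_Liminf_uminus[of sequentially "\<lambda>k. ereal (- f k)"] by simp
qed

theorem lemma37:
  fixes \<alpha> :: real
  assumes "\<alpha> \<notin> \<rat>" and "ln 2 / ln 3 < \<alpha>" and "\<alpha> < 1"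
  shows "limsup (\<lambda>k. ereal (PhiR (\<lambda>j. cword1 \<alpha> (k + j)))) = ereal (PhiR (cword1 \<alpha>))
       \<and> liminf (\<lambda>k. ereal (PhiR (\<lambda>j. cword1 \<alpha> (k + j)))) = ereal (PhiR (cword0 \<alpha>))
       \<and> PhiR (cword0 \<alpha>) = 3 * PhiR (cword1 \<alpha>) + 1"
proof -
  have \<alpha>: "0 < \<alpha>" "\<alpha> < 1" using pos_if_gt_ln2_div_ln3[OF assms(2)] assms(3) by auto
  define \<phi> where "\<phi> k = phi_series \<alpha> (intercept \<alpha> k)" for k
  have shifted: "PhiR (\<lambda>j. cword1 \<alpha> (k + j)) = - \<phi> k" for k
    unfolding \<phi>_def by (rule PhiR_shifted_cword1[OF \<alpha>])
  have bounds: "phi_series \<alpha> 0 \<le> \<phi> k" "\<phi> k \<le> phi_series \<alpha> 1" for k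
    unfolding \<phi>_def
    using assms(2) intercept_nonneg order.strict_implies_order[OF intercept_less_1]
    by (auto intro!: phi_series_mono)
  have "\<exists>\<^sub>F k in sequentially. \<phi> k < phi_series \<alpha> 0 + e" if "0 < e" for e
    unfolding \<phi>_def using that
    by (intro frequently_intercept_at_right_0[OF assms(1)]
        order_tendstoD(2)[OF phi_series_tendsto_at_right_0[OF assms(2)]]) simp
  then have "limsup (\<lambda>k. ereal (- \<phi> k)) = ereal (- phi_series \<alpha> 0)"
    using bounds by (intro limsup_eq_if_bounded_frequently_close) (auto simp: algebra_simps)
  moreover have "\<exists>\<^sub>F k in sequentially. phi_series \<alpha> 1 - e < \<phi> k" if "0 < e" for e
    unfolding \<phi>_def using that
    by (intro frequently_intercept_at_left_1[OF assms(1)]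
        order_tendstoD(1)[OF phi_series_tendsto_at_left_1[OF assms(1,2)]]) simp
  then have "liminf (\<lambda>k. ereal (- \<phi> k)) = ereal (- phi_series \<alpha> 1)"
    using bounds by (intro liminf_eq_if_bounded_frequently_close) (auto simp: algebra_simps)
  ultimately show ?thesis
    using PhiR_cword1[OF \<alpha>] PhiR_cword0[OF assms(1) \<alpha>] phi_series_1_eq[OF assms(2)]
    by (simp add: shifted)
qed

end
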